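(* Let $\delta_1,\delta_3$ be coprime positive integers, let $m\in\{1,\ldots,\max\{\delta_1,\delta_3\}\}$, and let $(x_{m1},x_{m3})$ be a B\'ezout couple of $m$ such that $(x_{m1},x_{m3})=(a_1,a_3)+(b_1,b_3)$ with integers $a_1,a_3,b_1,b_3$ satisfying $0<a_1\delta_1+a_3\delta_3<m$ and $0<b_1\delta_1+b_3\delta_3<m$. Then: (1) if $a_3\le-\delta_1$ then $a_1>\delta_3$; if moreover $\delta_3>\delta_1$, the converse also holds; (2) if $a_1\le-\delta_3$ then $a_3>\delta_1$; if moreover $\delta_1>\delta_3$, the converse also holds; (3) if $(x_{m1},x_{m3})$ is the $\lambda$-B\'ezout couple of $m$, then $a_3\le-\delta_1$ implies $\delta_1<b_3$, and $\delta_1<b_3$ implies $a_3<0$; (4) if $(x_{m1},x_{m3})$ is the $\lambda$-B\'ezout couple of $m$, then $a_1>\delta_3$ implies $b_1<-\delta_3$, and $b_1\le-\delta_3$ implies $0<a_1$; (5) if $(x_{m1},x_{m3})$ is the $\mu$-B\'ezout couple of $m$, then $a_1\le-\delta_3$ implies $\delta_3<b_1$, and $\delta_3<b_1$ implies $a_1<0$; (6) if $(x_{m1},x_{m3})$ is the $\mu$-B\'ezout couple of $m$, then $a_3>\delta_1$ implies $b_3<-\delta_1$, and $b_3\le-\delta_1$ implies $0<a_3$. All statements also hold with the roles of $(a_1,a_3)$ and $(b_1,b_3)$ interchanged.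
   Context: For $i\in\{1,\ldots,\max\{\delta_1,\delta_3\}\}$, the $\lambda$-B\'ezout couple of $i$ is the unique $(x,y)\in\mathbb Z^2$ with $x\delta_1+y\delta_3=i$ and $0<y\le\delta_1$; the $\mu$-B\'ezout couple of $i$ is the unique $(x,y)\in\mathbb Z^2$ with $x\delta_1+y\delta_3=i$ and $0<x\le\delta_3$. A B\'ezout couple of $i$ is either of these. *)

theory Defs
  imports Main
begin

definition lambda_bezout :: "int \<Rightarrow> int \<Rightarrow> int \<Rightarrow> int \<times> int \<Rightarrow> bool" where
  "lambda_bezout d1 d3 i c \<longleftrightarrow> fst c * d1 + snd c * d3 = i \<and> 0 < snd c \<and> snd c \<le> d1"

definition mu_bezout :: "int \<Rightarrow> int \<Rightarrow> int \<Rightarrow> int \<times> int \<Rightarrow> bool" where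
  "mu_bezout d1 d3 i c \<longleftrightarrow> fst c * d1 + snd c * d3 = i \<and> 0 < fst c \<and> fst c \<le> d3"

definition bezout_couple :: "int \<Rightarrow> int \<Rightarrow> int \<Rightarrow> int \<times> int \<Rightarrow> bool" where
  "bezout_couple d1 d3 i c \<longleftrightarrow> lambda_bezout d1 d3 i c \<or> mu_bezout d1 d3 i c"

end

theory Submission
  imports Defs
begin

text \<open>Everything is a size estimate. A positive combination \<open>a\<^sub>1\<delta>\<^sub>1 + a\<^sub>3\<delta>\<^sub>3\<close> with
  \<open>a\<^sub>3 \<le> -\<delta>\<^sub>1\<close> needs \<open>a\<^sub>1\<delta>\<^sub>1 > \<delta>\<^sub>1\<delta>\<^sub>3\<close>; conversely, if \<open>a\<^sub>1 > \<delta>\<^sub>3 > \<delta>\<^sub>1\<close> and the combination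
  stays below \<open>m \<le> \<delta>\<^sub>3\<close>, then \<open>a\<^sub>3\<close> must be at most \<open>-\<delta>\<^sub>1\<close>. Since \<open>0 < m \<le> max \<delta>\<^sub>1 \<delta>\<^sub>3\<close>,
  the \<open>\<lambda>\<close>-B\'ezout couple of \<open>m\<close> has \<open>1 - \<delta>\<^sub>3 \<le> x\<^sub>1 \<le> 0 < x\<^sub>3 \<le> \<delta>\<^sub>1\<close> (symmetrically for \<open>\<mu>\<close>),
  and splitting such a couple as \<open>a + b\<close> forces a large coordinate of one summand to
  be compensated by a large one of opposite sign in the other. Coprimality of \<open>\<delta>\<^sub>1, \<delta>\<^sub>3\<close>
  only guarantees that B\'ezout couples exist; the estimates do not use it.\<close>

lemma pos_comb_coeff_gt_of_coeff_le_neg: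
  fixes d1 d3 a1 a3 :: int
  assumes "0 < d1" "0 < d3" "0 < a1 * d1 + a3 * d3" "a3 \<le> - d1"
  shows "d3 < a1"
proof (rule ccontr)
  assume "\<not> d3 < a1"
  then have "a1 * d1 \<le> d3 * d1" using assms(1) by (intro mult_right_mono) auto
  moreover have "a3 * d3 \<le> - d1 * d3" using assms(2,4) by (intro mult_right_mono) auto
  ultimately show False using assms(3) by (simp add: algebra_simps)
qed

lemma small_comb_coeff_le_neg_of_coeff_gt:
  fixes d1 d3 a1 a3 :: int
  assumes "0 < d1" "d1 < d3" "a1 * d1 + a3 * d3 < d3" "d3 < a1"
  shows "a3 \<le> - d1"
proof (rule ccontr)
  assume "\<not> a3 \<le> - d1"
  then have "(1 - d1) * d3 \<le> a3 * d3" using assms(1,2) by (intro mult_right_mono) auto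
  moreover have "(d3 + 1) * d1 \<le> a1 * d1" using assms(1,4) by (intro mult_right_mono) auto
  ultimately show False using assms(1,3) by (simp add: algebra_simps)
qed

lemma mu_bezout_iff_lambda_bezout_swap:
  "mu_bezout d1 d3 i (x1, x3) \<longleftrightarrow> lambda_bezout d3 d1 i (x3, x1)"
  by (auto simp: mu_bezout_def lambda_bezout_def)

lemma lambda_bezout_fst_bounds:
  fixes d1 d3 m x1 x3 :: int
  assumes "0 < d1" "0 < d3" "0 < m" "m \<le> max d1 d3" "lambda_bezout d1 d3 m (x1, x3)"
  shows "1 - d3 \<le> x1 \<and> x1 \<le> 0"
proof -
  have comb: "x1 * d1 + x3 * d3 = m" and x3: "0 < x3" "x3 \<le> d1"
    using assms(5) by (auto simp: lambda_bezout_def)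
  have "x1 \<le> 0"
  proof (rule ccontr)
    assume "\<not> x1 \<le> 0"
    then have "d1 \<le> x1 * d1" "d3 \<le> x3 * d3" using assms(1,2) x3 by simp_all
    moreover have "m \<le> d1 \<or> m \<le> d3" using assms(4) by linarith
    ultimately show False using comb assms(1,2) by linarith
  qed
  moreover have "1 - d3 \<le> x1"
  proof (rule ccontr)
    assume "\<not> 1 - d3 \<le> x1"
    then have "x1 * d1 \<le> - d3 * d1" using assms(1) by (intro mult_right_mono) auto
    moreover have "x3 * d3 \<le> d1 * d3" using assms(2) x3 by (intro mult_right_mono) auto
    ultimately show False using comb assms(3) by (simp add: algebra_simps)
  qed
  ultimately show ?thesis by simp
qed

theorem lemma2p16:
  fixes d1 d3 m x1 x3 a1 a3 b1 b3 :: int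
  assumes "0 < d1" and "0 < d3" and "coprime d1 d3"
    and "1 \<le> m" and "m \<le> max d1 d3"
    and "bezout_couple d1 d3 m (x1, x3)"
    and "x1 = a1 + b1" and "x3 = a3 + b3"
    and "0 < a1 * d1 + a3 * d3" and "a1 * d1 + a3 * d3 < m"
    and "0 < b1 * d1 + b3 * d3" and "b1 * d1 + b3 * d3 < m"
  shows
    "(a3 \<le> - d1 \<longrightarrow> a1 > d3) \<and> (d3 > d1 \<longrightarrow> a1 > d3 \<longrightarrow> a3 \<le> - d1)
   \<and> (a1 \<le> - d3 \<longrightarrow> a3 > d1) \<and> (d1 > d3 \<longrightarrow> a3 > d1 \<longrightarrow> a1 \<le> - d3)
   \<and> (lambda_bezout d1 d3 m (x1, x3) \<longrightarrow>
        (a3 \<le> - d1 \<longrightarrow> d1 < b3) \<and> (d1 < b3 \<longrightarrow> a3 < 0))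
   \<and> (lambda_bezout d1 d3 m (x1, x3) \<longrightarrow>
        (a1 > d3 \<longrightarrow> b1 < - d3) \<and> (b1 \<le> - d3 \<longrightarrow> 0 < a1))
   \<and> (mu_bezout d1 d3 m (x1, x3) \<longrightarrow>
        (a1 \<le> - d3 \<longrightarrow> d3 < b1) \<and> (d3 < b1 \<longrightarrow> a1 < 0))
   \<and> (mu_bezout d1 d3 m (x1, x3) \<longrightarrow>
        (a3 > d1 \<longrightarrow> b3 < - d1) \<and> (b3 \<le> - d1 \<longrightarrow> 0 < a3))
   \<and> (b3 \<le> - d1 \<longrightarrow> b1 > d3) \<and> (d3 > d1 \<longrightarrow> b1 > d3 \<longrightarrow> b3 \<le> - d1)
   \<and> (b1 \<le> - d3 \<longrightarrow> b3 > d1) \<and> (d1 > d3 \<longrightarrow> b3 > d1 \<longrightarrow> b1 \<le> - d3)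
   \<and> (lambda_bezout d1 d3 m (x1, x3) \<longrightarrow>
        (b3 \<le> - d1 \<longrightarrow> d1 < a3) \<and> (d1 < a3 \<longrightarrow> b3 < 0))
   \<and> (lambda_bezout d1 d3 m (x1, x3) \<longrightarrow>
        (b1 > d3 \<longrightarrow> a1 < - d3) \<and> (a1 \<le> - d3 \<longrightarrow> 0 < b1))
   \<and> (mu_bezout d1 d3 m (x1, x3) \<longrightarrow>
        (b1 \<le> - d3 \<longrightarrow> d3 < a1) \<and> (d3 < a1 \<longrightarrow> b1 < 0))
   \<and> (mu_bezout d1 d3 m (x1, x3) \<longrightarrow>
        (b3 > d1 \<longrightarrow> a3 < - d1) \<and> (a3 \<le> - d1 \<longrightarrow> 0 < b3))"
proof -
  have gt1: "d3 < u1" if "0 < u1 * d1 + u3 * d3" "u3 \<le> - d1" for u1 u3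
    using pos_comb_coeff_gt_of_coeff_le_neg assms(1,2) that .
  have gt3: "d1 < u3" if "0 < u1 * d1 + u3 * d3" "u1 \<le> - d3" for u1 u3
    using pos_comb_coeff_gt_of_coeff_le_neg[of d3 d1 u3 u1] assms(1,2) that by simp
  have le1: "u3 \<le> - d1" if "d1 < d3" "u1 * d1 + u3 * d3 < m" "d3 < u1" for u1 u3
    using small_comb_coeff_le_neg_of_coeff_gt[of d1 d3 u1 u3] assms(1,5) that by simp
  have le3: "u1 \<le> - d3" if "d3 < d1" "u1 * d1 + u3 * d3 < m" "d1 < u3" for u1 u3
    using small_comb_coeff_le_neg_of_coeff_gt[of d3 d1 u3 u1] assms(2,5) that by simp
  have lambda: "0 < x3 \<and> x3 \<le> d1 \<and> 1 - d3 \<le> x1 \<and> x1 \<le> 0"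
    if "lambda_bezout d1 d3 m (x1, x3)"
    using lambda_bezout_fst_bounds[OF assms(1,2) _ assms(5) that] assms(4) that
    by (simp add: lambda_bezout_def)
  have mu: "0 < x1 \<and> x1 \<le> d3 \<and> 1 - d1 \<le> x3 \<and> x3 \<le> 0"
    if "mu_bezout d1 d3 m (x1, x3)"
    using lambda_bezout_fst_bounds[OF assms(2,1), of m x3 x1] assms(4,5) that
    by (simp add: mu_bezout_iff_lambda_bezout_swap lambda_bezout_def max.commute)
  show ?thesis
    using gt1 gt3 le1 le3 lambda mu assms(7-12) by (intro conjI impI) (blast | linarith)+
qed

end
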